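(* Let $\Lambda$ be a strongly connected finite $k$-graph and let $M$ be the Borel probability measure on $\Lambda^\infty$ with $M(Z(\lambda))=\rho(\Lambda)^{-d(\lambda)}x^\Lambda_{s(\lambda)}$ for all $\lambda$. Suppose $g\in\mathbb{Z}^k\setminus\operatorname{Per}\Lambda$. Then there exist $a\in\mathbb{N}^k\setminus\{0\}$ and $0<K<1$ such that whenever $\mu,\nu\in\Lambda$ satisfy $s(\mu)=s(\nu)$ and $d(\mu)-d(\nu)=g$, we have for all $j\in\mathbb{N}$ \[M\Big(\bigcup_{\lambda\in s(\mu)\Lambda^{ja},\ \Lambda^{\min}(\mu\lambda,\nu\lambda)\neq\emptyset}Z(\mu\lambda)\Big)\le K^jM(Z(\mu)).\]
   Context: A $k$-graph is a countable category $\Lambda$ with a functor $d:\Lambda\to\mathbb{N}^k$ such that whenever $d(\lambda)=m+n$ there are unique $\mu,\nu$ with $d(\mu)=m$, $d(\nu)=n$, $\lambda=\mu\nu$. $\Lambda^n=d^{-1}(n)$, $\Lambda^0$ = vertices, $r,s$ range and source, $v\Lambda^n=\{\lambda\in\Lambda^n:r(\lambda)=v\}$. Standing convention: $\Lambda^{e_i}\neq\emptyset$ for each $i$. Finite: each $\Lambda^n$ finite; strongly connected: $v\Lambda w\neq\emptyset$ for all vertices. $\Lambda^{\min}(\mu,\nu)=\{(\alpha,\beta):\mu\alpha=\nu\beta,\ d(\mu\alpha)=d(\mu)\vee d(\nu)\}$. Coordinate matrices $A_i(v,w)=|v\Lambda^{e_i}w|$, $\rho(\Lambda)^n=\prod_i\rho(A_i)^{n_i}$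 (spectral radii). $x^\Lambda$ is the unique vector in $[0,\infty)^{\Lambda^0}$ with $\sum_vx^\Lambda_v=1$ and $A_ix^\Lambda=\rho(A_i)x^\Lambda$ for all $i$. Infinite paths: degree-preserving functors $x:\Omega_k\to\Lambda$, $\Omega_k=\{(m,n)\in\mathbb{N}^k\times\mathbb{N}^k:m\le n\}$ with $r(m,n)=(m,m)$, $s(m,n)=(n,n)$, $(m,n)(n,p)=(m,p)$, $d(m,n)=n-m$; $\Lambda^\infty$ their set, topologised by the compact open sets $Z(\lambda)=\{x:x(0,d(\lambda))=\lambda\}$; $\sigma^n(x)(p,q)=x(n+p,n+q)$. $\operatorname{Per}\Lambda=\{m-n:\sigma^m(x)=\sigma^n(x)\ \forall x\in\Lambda^\infty\}$. *)

theory Defs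
  imports "HOL-Probability.Probability" "HOL-Library.Function_Algebras"
begin

text \<open>Elements of N^k are encoded as functions nat => nat vanishing at all i >= k.
  Objects (vertices) are identified with their identity morphisms.\<close>

record 'a kgraph =
  mor :: "'a set"
  rng :: "'a \<Rightarrow> 'a"
  src :: "'a \<Rightarrow> 'a"
  cmp :: "'a \<Rightarrow> 'a \<Rightarrow> 'a"
  deg :: "'a \<Rightarrow> nat \<Rightarrow> nat"

definition NK :: "nat \<Rightarrow> (nat \<Rightarrow> nat) set" where
  "NK k = {m. \<forall>i\<ge>k. m i = 0}"

definition ZK :: "nat \<Rightarrow> (nat \<Rightarrow> int) set" where
  "ZK k = {m. \<forall>i\<ge>k. m i = 0}"

definition unitvec :: "nat \<Rightarrow> nat \<Rightarrow> nat" where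
  "unitvec i = (\<lambda>j. if j = i then 1 else 0)"

definition verts :: "'a kgraph \<Rightarrow> 'a set" where
  "verts G = rng G ` mor G"

definition is_kgraph :: "nat \<Rightarrow> 'a kgraph \<Rightarrow> bool" where
  "is_kgraph k G \<longleftrightarrow>
     countable (mor G) \<and>
     (\<forall>\<mu>\<in>mor G. rng G \<mu> \<in> mor G \<and> src G \<mu> \<in> mor G) \<and>
     (\<forall>\<mu>\<in>mor G. rng G (rng G \<mu>) = rng G \<mu> \<and> src G (rng G \<mu>) = rng G \<mu>
                 \<and> rng G (src G \<mu>) = src G \<mu> \<and> src G (src G \<mu>) = src G \<mu>) \<and>
     (\<forall>\<mu>\<in>mor G. cmp G (rng G \<mu>) \<mu> = \<mu> \<and> cmp G \<mu> (src G \<mu>) = \<mu>) \<and>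
     (\<forall>\<mu>\<in>mor G. \<forall>\<nu>\<in>mor G. src G \<mu> = rng G \<nu> \<longrightarrow>
        cmp G \<mu> \<nu> \<in> mor G \<and> rng G (cmp G \<mu> \<nu>) = rng G \<mu> \<and> src G (cmp G \<mu> \<nu>) = src G \<nu>) \<and>
     (\<forall>\<mu>\<in>mor G. \<forall>\<nu>\<in>mor G. \<forall>\<eta>\<in>mor G. src G \<mu> = rng G \<nu> \<longrightarrow> src G \<nu> = rng G \<eta> \<longrightarrow>
        cmp G (cmp G \<mu> \<nu>) \<eta> = cmp G \<mu> (cmp G \<nu> \<eta>)) \<and>
     \<comment> \<open>d is a functor to N^k\<close>
     (\<forall>\<mu>\<in>mor G. deg G \<mu> \<in> NK k) \<and>
     (\<forall>\<mu>\<in>mor G. deg G (rng G \<mu>) = 0) \<and>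
     (\<forall>\<mu>\<in>mor G. \<forall>\<nu>\<in>mor G. src G \<mu> = rng G \<nu> \<longrightarrow> deg G (cmp G \<mu> \<nu>) = deg G \<mu> + deg G \<nu>) \<and>
     \<comment> \<open>unique factorisation property\<close>
     (\<forall>l\<in>mor G. \<forall>m n. deg G l = m + n \<longrightarrow>
        (\<exists>!p. fst p \<in> mor G \<and> snd p \<in> mor G \<and> src G (fst p) = rng G (snd p) \<and>
              deg G (fst p) = m \<and> deg G (snd p) = n \<and> cmp G (fst p) (snd p) = l))"

definition paths_of_deg :: "'a kgraph \<Rightarrow> (nat \<Rightarrow> nat) \<Rightarrow> 'a set" where
  "paths_of_deg G n = {l\<in>mor G. deg G l = n}"

definition standing_conv :: "nat \<Rightarrow> 'a kgraph \<Rightarrow> bool" where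
  "standing_conv k G \<longleftrightarrow> (\<forall>i<k. paths_of_deg G (unitvec i) \<noteq> {})"

definition finite_kgraph :: "'a kgraph \<Rightarrow> bool" where
  "finite_kgraph G \<longleftrightarrow> (\<forall>n. finite (paths_of_deg G n))"

definition strongly_connected :: "'a kgraph \<Rightarrow> bool" where
  "strongly_connected G \<longleftrightarrow>
     (\<forall>v\<in>verts G. \<forall>w\<in>verts G. \<exists>l\<in>mor G. rng G l = v \<and> src G l = w)"

definition Lmin :: "'a kgraph \<Rightarrow> 'a \<Rightarrow> 'a \<Rightarrow> ('a \<times> 'a) set" where
  "Lmin G \<mu> \<nu> = {(\<alpha>, \<beta>). \<alpha> \<in> mor G \<and> \<beta> \<in> mor G \<and> src G \<mu> = rng G \<alpha> \<and> src G \<nu> = rng G \<beta> \<and>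
      cmp G \<mu> \<alpha> = cmp G \<nu> \<beta> \<and> deg G (cmp G \<mu> \<alpha>) = (\<lambda>i. max (deg G \<mu> i) (deg G \<nu> i))}"

definition coord_mat :: "'a kgraph \<Rightarrow> nat \<Rightarrow> 'a \<Rightarrow> 'a \<Rightarrow> nat" where
  "coord_mat G i v w = card {l\<in>paths_of_deg G (unitvec i). rng G l = v \<and> src G l = w}"

definition eigenvalues_on :: "'a set \<Rightarrow> ('a \<Rightarrow> 'a \<Rightarrow> nat) \<Rightarrow> complex set" where
  "eigenvalues_on V A = {c. \<exists>z::'a \<Rightarrow> complex. (\<exists>v\<in>V. z v \<noteq> 0) \<and>
      (\<forall>v\<in>V. (\<Sum>w\<in>V. of_nat (A v w) * z w) = c * z v)}"

definition spec_rad :: "'a set \<Rightarrow> ('a \<Rightarrow> 'a \<Rightarrow> nat) \<Rightarrow> real" where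
  "spec_rad V A = Sup (cmod ` eigenvalues_on V A)"

definition rho :: "'a kgraph \<Rightarrow> nat \<Rightarrow> real" where
  "rho G i = spec_rad (verts G) (coord_mat G i)"

definition is_PF_vector :: "nat \<Rightarrow> 'a kgraph \<Rightarrow> ('a \<Rightarrow> real) \<Rightarrow> bool" where
  "is_PF_vector k G x \<longleftrightarrow>
     (\<forall>v\<in>verts G. 0 \<le> x v) \<and> (\<Sum>v\<in>verts G. x v) = 1 \<and>
     (\<forall>i<k. \<forall>v\<in>verts G. (\<Sum>w\<in>verts G. real (coord_mat G i v w) * x w) = rho G i * x v)"

definition Omega :: "nat \<Rightarrow> ((nat \<Rightarrow> nat) \<times> (nat \<Rightarrow> nat)) set" where
  "Omega k = {(m, n). m \<in> NK k \<and> n \<in> NK k \<and> m \<le> n}"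

text \<open>Degree-preserving functors Omega_k -> Lambda; values off Omega_k are fixed
  to undefined so that paths are determined by their values on Omega_k.\<close>
definition inf_paths :: "nat \<Rightarrow> 'a kgraph \<Rightarrow> ((nat \<Rightarrow> nat) \<times> (nat \<Rightarrow> nat) \<Rightarrow> 'a) set" where
  "inf_paths k G = {x.
     (\<forall>p. p \<notin> Omega k \<longrightarrow> x p = undefined) \<and>
     (\<forall>(m, n)\<in>Omega k. x (m, n) \<in> mor G \<and> deg G (x (m, n)) = n - m \<and>
          rng G (x (m, n)) = x (m, m) \<and> src G (x (m, n)) = x (n, n)) \<and>
     (\<forall>m n p. (m, n) \<in> Omega k \<longrightarrow> (n, p) \<in> Omega k \<longrightarrow>
          x (m, p) = cmp G (x (m, n)) (x (n, p)))}"

definition cyl :: "nat \<Rightarrow> 'a kgraph \<Rightarrow> 'a \<Rightarrow> ((nat \<Rightarrow> nat) \<times> (nat \<Rightarrow> nat) \<Rightarrow> 'a) set" where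
  "cyl k G l = {x \<in> inf_paths k G. x (0, deg G l) = l}"

definition path_topology :: "nat \<Rightarrow> 'a kgraph \<Rightarrow> ((nat \<Rightarrow> nat) \<times> (nat \<Rightarrow> nat) \<Rightarrow> 'a) topology" where
  "path_topology k G = topology_generated_by (cyl k G ` mor G)"

definition path_borel_sets :: "nat \<Rightarrow> 'a kgraph \<Rightarrow> ((nat \<Rightarrow> nat) \<times> (nat \<Rightarrow> nat) \<Rightarrow> 'a) set set" where
  "path_borel_sets k G = sigma_sets (inf_paths k G) {U. openin (path_topology k G) U}"

definition shift :: "nat \<Rightarrow> (nat \<Rightarrow> nat) \<Rightarrow> ((nat \<Rightarrow> nat) \<times> (nat \<Rightarrow> nat) \<Rightarrow> 'a)
    \<Rightarrow> ((nat \<Rightarrow> nat) \<times> (nat \<Rightarrow> nat) \<Rightarrow> 'a)" where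
  "shift k n x = (\<lambda>(p, q). if (p, q) \<in> Omega k then x (n + p, n + q) else undefined)"

definition Per :: "nat \<Rightarrow> 'a kgraph \<Rightarrow> (nat \<Rightarrow> int) set" where
  "Per k G = {(\<lambda>i. int (m i) - int (n i)) | m n. m \<in> NK k \<and> n \<in> NK k \<and>
                (\<forall>x\<in>inf_paths k G. shift k m x = shift k n x)}"

end

theory Submission
  imports Defs
begin

text \<open>Write \<open>g = m - n\<close> with \<open>m, n \<in> \<nat>\<^sup>k\<close>. Since \<open>g \<notin> Per \<Lambda>\<close>, some infinite path \<open>y\<close> has
  \<open>\<sigma>\<^sup>m y \<noteq> \<sigma>\<^sup>n y\<close>, and a finite initial segment \<open>\<eta>\<close> of \<open>y\<close> already contains two distinct
  segments of equal degree whose starting degrees differ by \<open>n - m\<close>. If \<open>d(\<mu>) - d(\<nu>) = g\<close>,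
  then \<open>\<mu>\<lambda>\<close> and \<open>\<nu>\<lambda>\<close> can have no common extension once \<open>\<lambda>\<close> runs through \<open>\<eta>\<close>: unique
  factorisation would identify the two segments. By strong connectivity there is one degree
  \<open>a\<close> such that every vertex is the range of a path of degree \<open>a\<close> through \<open>\<eta>\<close>. So each
  \<open>\<lambda>\<close> with \<open>\<Lambda>\<^sup>m\<^sup>i\<^sup>n(\<mu>\<lambda>, \<nu>\<lambda>) \<noteq> \<emptyset>\<close> has an extension of degree \<open>a\<close> for which this fails, and the
  cylinder of that extension carries at least the fraction \<open>\<rho>(\<Lambda>)\<^sup>-\<^sup>a min\<^sub>v x\<^sub>v\<close> of
  \<open>M(Z(\<mu>\<lambda>))\<close>. Passing from \<open>j a\<close> to \<open>(j + 1) a\<close> thus multiplies the measure by at most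
  \<open>K = 1 - \<rho>(\<Lambda>)\<^sup>-\<^sup>a min\<^sub>v x\<^sub>v\<close>.\<close>

lemma NK_0 [simp]: "0 \<in> NK k"
  and NK_add [simp]: "m \<in> NK k \<Longrightarrow> n \<in> NK k \<Longrightarrow> m + n \<in> NK k"
  by (simp_all add: NK_def)

lemma add_eq_add_if_int_diff_eq:
  fixes p q m n :: "nat \<Rightarrow> nat"
  assumes "(\<lambda>i. int (p i) - int (q i)) = (\<lambda>i. int (m i) - int (n i))"
  shows "p + n = q + m"
proof
  fix i
  have "int (p i + n i) = int (q i + m i)" using fun_cong[OF assms, of i] by simp
  then show "(p + n) i = (q + m) i" by simp
qed

lemma NK_finite_upper_bound:
  assumes "finite D" "D \<subseteq> NK k"
  shows "\<exists>a\<in>NK k. \<forall>d\<in>D. d \<le> a"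
  using assms
proof (induction D rule: finite_induct)
  case empty
  show ?case by (auto simp: NK_def)
next
  case (insert d D)
  then obtain a where "a \<in> NK k" "\<forall>d\<in>D. d \<le> a" by auto
  moreover have "sup d a \<in> NK k" using \<open>a \<in> NK k\<close> insert.prems by (simp add: NK_def)
  ultimately show ?case by (blast intro: le_supI2 sup_ge1)
qed

locale k_graph =
  fixes k :: nat and G :: "'a kgraph"
  assumes is_kgraph: "is_kgraph k G"
begin

lemma mor_rng [simp]: "\<mu> \<in> mor G \<Longrightarrow> rng G \<mu> \<in> mor G"
  and mor_src [simp]: "\<mu> \<in> mor G \<Longrightarrow> src G \<mu> \<in> mor G"
  and rng_rng [simp]: "\<mu> \<in> mor G \<Longrightarrow> rng G (rng G \<mu>) = rng G \<mu>"
  and src_rng [simp]: "\<mu> \<in> mor G \<Longrightarrow> src G (rng G \<mu>) = rng G \<mu>"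
  and rng_src [simp]: "\<mu> \<in> mor G \<Longrightarrow> rng G (src G \<mu>) = src G \<mu>"
  and src_src [simp]: "\<mu> \<in> mor G \<Longrightarrow> src G (src G \<mu>) = src G \<mu>"
  and cmp_rng_left [simp]: "\<mu> \<in> mor G \<Longrightarrow> cmp G (rng G \<mu>) \<mu> = \<mu>"
  and cmp_src_right [simp]: "\<mu> \<in> mor G \<Longrightarrow> cmp G \<mu> (src G \<mu>) = \<mu>"
  and deg_in_NK: "\<mu> \<in> mor G \<Longrightarrow> deg G \<mu> \<in> NK k"
  and deg_rng [simp]: "\<mu> \<in> mor G \<Longrightarrow> deg G (rng G \<mu>) = 0"
  using is_kgraph unfolding is_kgraph_def by auto

lemma deg_src [simp]: "\<mu> \<in> mor G \<Longrightarrow> deg G (src G \<mu>) = 0"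
  by (metis deg_rng mor_src rng_src)

context
  fixes \<mu> \<nu> assumes mor: "\<mu> \<in> mor G" "\<nu> \<in> mor G" and composable: "src G \<mu> = rng G \<nu>"
begin

lemma cmp_mor [simp]: "cmp G \<mu> \<nu> \<in> mor G"
  and rng_cmp [simp]: "rng G (cmp G \<mu> \<nu>) = rng G \<mu>"
  and src_cmp [simp]: "src G (cmp G \<mu> \<nu>) = src G \<nu>"
  and deg_cmp [simp]: "deg G (cmp G \<mu> \<nu>) = deg G \<mu> + deg G \<nu>"
  using is_kgraph mor composable unfolding is_kgraph_def by auto

end

lemma cmp_assoc [simp]:
  "\<mu> \<in> mor G \<Longrightarrow> \<nu> \<in> mor G \<Longrightarrow> \<eta> \<in> mor G \<Longrightarrow> src G \<mu> = rng G \<nu> \<Longrightarrow> src G \<nu> = rng G \<eta> \<Longrightarrow>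
   cmp G (cmp G \<mu> \<nu>) \<eta> = cmp G \<mu> (cmp G \<nu> \<eta>)"
  using is_kgraph unfolding is_kgraph_def by auto

lemma unique_factorisation:
  "l \<in> mor G \<Longrightarrow> deg G l = m + n \<Longrightarrow>
   \<exists>!p. fst p \<in> mor G \<and> snd p \<in> mor G \<and> src G (fst p) = rng G (snd p) \<and>
     deg G (fst p) = m \<and> deg G (snd p) = n \<and> cmp G (fst p) (snd p) = l"
  using is_kgraph unfolding is_kgraph_def by (elim conjE) blast

lemma factorisation_exists:
  assumes "l \<in> mor G" "deg G l = m + n"
  obtains \<alpha> \<beta> where "\<alpha> \<in> mor G" "\<beta> \<in> mor G" "src G \<alpha> = rng G \<beta>"
    "deg G \<alpha> = m" "deg G \<beta> = n" "cmp G \<alpha> \<beta> = l"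
  using unique_factorisation[OF assms] that by blast

lemma factorisation_unique:
  assumes "\<alpha> \<in> mor G" "\<beta> \<in> mor G" "src G \<alpha> = rng G \<beta>"
    and "\<alpha>' \<in> mor G" "\<beta>' \<in> mor G" "src G \<alpha>' = rng G \<beta>'"
    and "cmp G \<alpha> \<beta> = cmp G \<alpha>' \<beta>'" "deg G \<alpha> = deg G \<alpha>'" "deg G \<beta> = deg G \<beta>'"
  shows "\<alpha> = \<alpha>' \<and> \<beta> = \<beta>'"
proof -
  have "cmp G \<alpha> \<beta> \<in> mor G" "deg G (cmp G \<alpha> \<beta>) = deg G \<alpha> + deg G \<beta>"
    using assms by simp_all
  then have "\<exists>!p. fst p \<in> mor G \<and> snd p \<in> mor G \<and> src G (fst p) = rng G (snd p) \<and>
      deg G (fst p) = deg G \<alpha> \<and> deg G (snd p) = deg G \<beta> \<and> cmp G (fst p) (snd p) = cmp G \<alpha> \<beta>"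
    by (rule unique_factorisation)
  then have "(\<alpha>, \<beta>) = (\<alpha>', \<beta>')" using assms by (metis fst_conv snd_conv)
  then show ?thesis by simp
qed

lemma left_cancel:
  assumes "\<kappa> \<in> mor G" "\<alpha> \<in> mor G" "\<beta> \<in> mor G" "src G \<kappa> = rng G \<alpha>" "src G \<kappa> = rng G \<beta>"
    and "cmp G \<kappa> \<alpha> = cmp G \<kappa> \<beta>" "deg G \<alpha> = deg G \<beta>"
  shows "\<alpha> = \<beta>"
  using factorisation_unique[OF assms(1,2,4,1,3,5,6) refl assms(7)] by simp

lemma middle_cancel:
  assumes "\<alpha> \<in> mor G" "\<rho> \<in> mor G" "\<beta> \<in> mor G" "src G \<alpha> = rng G \<rho>" "src G \<rho> = rng G \<beta>"
    and "\<alpha>' \<in> mor G" "\<rho>' \<in> mor G" "\<beta>' \<in> mor G" "src G \<alpha>' = rng G \<rho>'" "src G \<rho>' = rng G \<beta>'"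
    and eq: "cmp G \<alpha> (cmp G \<rho> \<beta>) = cmp G \<alpha>' (cmp G \<rho>' \<beta>')"
    and "deg G \<alpha> = deg G \<alpha>'" "deg G \<rho> = deg G \<rho>'"
  shows "\<rho> = \<rho>'"
proof -
  have eq': "cmp G (cmp G \<alpha> \<rho>) \<beta> = cmp G (cmp G \<alpha>' \<rho>') \<beta>'" using assms by simp
  have "deg G (cmp G (cmp G \<alpha> \<rho>) \<beta>) = deg G \<alpha> + deg G \<rho> + deg G \<beta>"
    "deg G (cmp G (cmp G \<alpha>' \<rho>') \<beta>') = deg G \<alpha>' + deg G \<rho>' + deg G \<beta>'"
    using assms(1-10) by (simp_all add: add.assoc)
  then have "deg G \<beta> = deg G \<beta>'" using eq' assms(12,13) by (metis add_left_imp_eq)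
  then have "cmp G \<alpha> \<rho> = cmp G \<alpha>' \<rho>'"
    using factorisation_unique[of "cmp G \<alpha> \<rho>" \<beta> "cmp G \<alpha>' \<rho>'" \<beta>'] assms eq' by simp
  then show ?thesis using factorisation_unique[of \<alpha> \<rho> \<alpha>' \<rho>'] assms by simp
qed

lemma verts_iff: "v \<in> verts G \<longleftrightarrow> v \<in> mor G \<and> rng G v = v"
  unfolding verts_def by (auto intro: image_eqI[where x = v])

lemma src_in_verts [simp]: "\<mu> \<in> mor G \<Longrightarrow> src G \<mu> \<in> verts G"
  and rng_in_verts [simp]: "\<mu> \<in> mor G \<Longrightarrow> rng G \<mu> \<in> verts G"
  by (auto simp: verts_iff)

lemma deg_eq_0_imp_vertex: "l \<in> mor G \<Longrightarrow> deg G l = 0 \<Longrightarrow> l = rng G l"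
  using factorisation_unique[of "rng G l" l l "src G l"] by simp

text \<open>A common extension is cut down to a minimal one at degree \<open>d(P) \<or> d(Q)\<close>.\<close>

lemma Lmin_nonempty_iff_common_extension:
  assumes P: "P \<in> mor G" and Q: "Q \<in> mor G"
  shows "Lmin G P Q \<noteq> {} \<longleftrightarrow>
    (\<exists>\<alpha>\<in>mor G. \<exists>\<beta>\<in>mor G. src G P = rng G \<alpha> \<and> src G Q = rng G \<beta> \<and> cmp G P \<alpha> = cmp G Q \<beta>)"
proof
  assume "Lmin G P Q \<noteq> {}"
  then show "\<exists>\<alpha>\<in>mor G. \<exists>\<beta>\<in>mor G. src G P = rng G \<alpha> \<and> src G Q = rng G \<beta> \<and> cmp G P \<alpha> = cmp G Q \<beta>"
    unfolding Lmin_def by blast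
next
  assume "\<exists>\<alpha>\<in>mor G. \<exists>\<beta>\<in>mor G. src G P = rng G \<alpha> \<and> src G Q = rng G \<beta> \<and> cmp G P \<alpha> = cmp G Q \<beta>"
  then obtain \<alpha> \<beta> where \<alpha>\<beta>: "\<alpha> \<in> mor G" "\<beta> \<in> mor G" "src G P = rng G \<alpha>" "src G Q = rng G \<beta>"
    and eq: "cmp G P \<alpha> = cmp G Q \<beta>" by blast
  define D where "D = (\<lambda>i. max (deg G P i) (deg G Q i))"
  have deq: "deg G P + deg G \<alpha> = deg G Q + deg G \<beta>"
    using arg_cong[OF eq, of "deg G"] P Q \<alpha>\<beta> by simp
  have deq_at: "deg G P i + deg G \<alpha> i = deg G Q i + deg G \<beta> i" for i
    using fun_cong[OF deq, of i] by simp
  have deg_alpha: "deg G \<alpha> = (D - deg G P) + (deg G P + deg G \<alpha> - D)"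
  proof
    fix i show "deg G \<alpha> i = ((D - deg G P) + (deg G P + deg G \<alpha> - D)) i"
      using deq_at[of i] by (simp add: D_def)
  qed
  obtain \<alpha>1 \<alpha>2 where \<alpha>: "\<alpha>1 \<in> mor G" "\<alpha>2 \<in> mor G" "src G \<alpha>1 = rng G \<alpha>2"
    "deg G \<alpha>1 = D - deg G P" "deg G \<alpha>2 = deg G P + deg G \<alpha> - D" "cmp G \<alpha>1 \<alpha>2 = \<alpha>"
    using factorisation_exists[OF \<alpha>\<beta>(1) deg_alpha] by blast
  have deg_beta: "deg G \<beta> = (D - deg G Q) + (deg G Q + deg G \<beta> - D)"
  proof
    fix i show "deg G \<beta> i = ((D - deg G Q) + (deg G Q + deg G \<beta> - D)) i"
      using deq_at[of i] by (simp add: D_def)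
  qed
  obtain \<beta>1 \<beta>2 where \<beta>: "\<beta>1 \<in> mor G" "\<beta>2 \<in> mor G" "src G \<beta>1 = rng G \<beta>2"
    "deg G \<beta>1 = D - deg G Q" "deg G \<beta>2 = deg G Q + deg G \<beta> - D" "cmp G \<beta>1 \<beta>2 = \<beta>"
    using factorisation_exists[OF \<alpha>\<beta>(2) deg_beta] by blast
  have r: "rng G \<alpha>1 = src G P" "rng G \<beta>1 = src G Q"
    using \<alpha> \<beta> \<alpha>\<beta> by (metis rng_cmp)+
  have D: "deg G (cmp G P \<alpha>1) = D" "deg G (cmp G Q \<beta>1) = D"
    using P Q \<alpha>(1,4) \<beta>(1,4) r by (simp_all add: D_def fun_eq_iff)
  have "cmp G (cmp G P \<alpha>1) \<alpha>2 = cmp G P \<alpha>" "cmp G (cmp G Q \<beta>1) \<beta>2 = cmp G Q \<beta>"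
    using P Q \<alpha>(1-3) \<beta>(1-3) r by (simp_all add: \<alpha>(6) \<beta>(6))
  moreover have "deg G \<alpha>2 = deg G \<beta>2" using \<alpha>(5) \<beta>(5) deq by simp
  ultimately have "cmp G P \<alpha>1 = cmp G Q \<beta>1"
    using factorisation_unique[of "cmp G P \<alpha>1" \<alpha>2 "cmp G Q \<beta>1" \<beta>2] P Q \<alpha>(1-3) \<beta>(1-3) r D eq
    by simp
  then have "(\<alpha>1, \<beta>1) \<in> Lmin G P Q"
    using P Q \<alpha> \<beta> r D unfolding Lmin_def D_def by simp
  then show "Lmin G P Q \<noteq> {}" by blast
qed

lemma Lmin_nonempty_prefix:
  assumes "\<mu> \<in> mor G" "\<nu> \<in> mor G" "l \<in> mor G" "l' \<in> mor G"
    and "src G \<mu> = rng G l" "src G \<nu> = rng G l" "src G l = rng G l'"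
    and "Lmin G (cmp G \<mu> (cmp G l l')) (cmp G \<nu> (cmp G l l')) \<noteq> {}"
  shows "Lmin G (cmp G \<mu> l) (cmp G \<nu> l) \<noteq> {}"
proof -
  have "\<exists>\<alpha>\<in>mor G. \<exists>\<beta>\<in>mor G. src G (cmp G \<mu> (cmp G l l')) = rng G \<alpha> \<and>
      src G (cmp G \<nu> (cmp G l l')) = rng G \<beta> \<and>
      cmp G (cmp G \<mu> (cmp G l l')) \<alpha> = cmp G (cmp G \<nu> (cmp G l l')) \<beta>"
    using assms Lmin_nonempty_iff_common_extension[of "cmp G \<mu> (cmp G l l')" "cmp G \<nu> (cmp G l l')"]
    by simp
  then obtain \<alpha> \<beta> where "\<alpha> \<in> mor G" "\<beta> \<in> mor G"
    "src G (cmp G \<mu> (cmp G l l')) = rng G \<alpha>" "src G (cmp G \<nu> (cmp G l l')) = rng G \<beta>"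
    "cmp G (cmp G \<mu> (cmp G l l')) \<alpha> = cmp G (cmp G \<nu> (cmp G l l')) \<beta>"
    by blast
  then have "cmp G l' \<alpha> \<in> mor G" "cmp G l' \<beta> \<in> mor G"
    "src G (cmp G \<mu> l) = rng G (cmp G l' \<alpha>)" "src G (cmp G \<nu> l) = rng G (cmp G l' \<beta>)"
    "cmp G (cmp G \<mu> l) (cmp G l' \<alpha>) = cmp G (cmp G \<nu> l) (cmp G l' \<beta>)"
    using assms by simp_all
  then show ?thesis
    using Lmin_nonempty_iff_common_extension[of "cmp G \<mu> l" "cmp G \<nu> l"] assms by auto
qed

lemma inf_path_segment:
  assumes "y \<in> inf_paths k G" "m \<in> NK k" "n \<in> NK k" "m \<le> n"
  shows "y (m, n) \<in> mor G" "deg G (y (m, n)) = n - m"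
    "rng G (y (m, n)) = y (m, m)" "src G (y (m, n)) = y (n, n)"
proof -
  have "\<forall>(m, n)\<in>Omega k. y (m, n) \<in> mor G \<and> deg G (y (m, n)) = n - m \<and>
      rng G (y (m, n)) = y (m, m) \<and> src G (y (m, n)) = y (n, n)"
    using assms(1) unfolding inf_paths_def by (elim CollectE conjE)
  moreover have "(m, n) \<in> Omega k" using assms(2-4) by (simp add: Omega_def)
  ultimately show "y (m, n) \<in> mor G" "deg G (y (m, n)) = n - m"
    "rng G (y (m, n)) = y (m, m)" "src G (y (m, n)) = y (n, n)"
    by auto
qed

lemma inf_path_cmp:
  assumes "y \<in> inf_paths k G" "m \<in> NK k" "n \<in> NK k" "p \<in> NK k" "m \<le> n" "n \<le> p"
  shows "y (m, p) = cmp G (y (m, n)) (y (n, p))"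
proof -
  have "\<forall>m n p. (m, n) \<in> Omega k \<longrightarrow> (n, p) \<in> Omega k \<longrightarrow> y (m, p) = cmp G (y (m, n)) (y (n, p))"
    using assms(1) unfolding inf_paths_def by (elim CollectE conjE)
  moreover have "(m, n) \<in> Omega k" "(n, p) \<in> Omega k" using assms(2-6) by (simp_all add: Omega_def)
  ultimately show ?thesis by blast
qed

definition factorises :: "'a \<Rightarrow> 'a \<Rightarrow> 'a \<Rightarrow> 'a \<Rightarrow> bool" where
  "factorises \<eta> \<gamma> \<rho> \<xi> \<longleftrightarrow> \<gamma> \<in> mor G \<and> \<rho> \<in> mor G \<and> \<xi> \<in> mor G \<and>
     src G \<gamma> = rng G \<rho> \<and> src G \<rho> = rng G \<xi> \<and> \<eta> = cmp G \<gamma> (cmp G \<rho> \<xi>)"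

text \<open>A finite path \<open>\<eta>\<close> separates \<open>m\<close> and \<open>n\<close> if it contains two distinct segments
  of the same degree whose starting degrees differ by \<open>n - m\<close>: it witnesses locally that
  the shifts \<open>\<sigma>\<^sup>m\<close> and \<open>\<sigma>\<^sup>n\<close> differ.\<close>

definition separates :: "(nat \<Rightarrow> nat) \<Rightarrow> (nat \<Rightarrow> nat) \<Rightarrow> 'a \<Rightarrow> bool" where
  "separates m n \<eta> \<longleftrightarrow> (\<exists>\<gamma> \<rho> \<xi> \<gamma>' \<rho>' \<xi>'. factorises \<eta> \<gamma> \<rho> \<xi> \<and> factorises \<eta> \<gamma>' \<rho>' \<xi>' \<and>
     deg G \<gamma> + n = deg G \<gamma>' + m \<and> deg G \<rho> = deg G \<rho>' \<and> \<rho> \<noteq> \<rho>')"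

lemma factorisesD:
  assumes "factorises \<eta> \<gamma> \<rho> \<xi>"
  shows "\<gamma> \<in> mor G" "\<rho> \<in> mor G" "\<xi> \<in> mor G" "src G \<gamma> = rng G \<rho>" "src G \<rho> = rng G \<xi>"
    and "\<eta> \<in> mor G" "rng G \<gamma> = rng G \<eta>" "src G \<xi> = src G \<eta>"
    and "deg G \<eta> = deg G \<gamma> + deg G \<rho> + deg G \<xi>"
  using assms unfolding factorises_def by (auto simp: add.assoc)

lemma inf_path_factorises:
  assumes "y \<in> inf_paths k G" "p \<in> NK k" "q \<in> NK k" "r \<in> NK k" "p \<le> q" "q \<le> r"
  shows "factorises (y (0, r)) (y (0, p)) (y (p, q)) (y (q, r))"
proof -
  have "0 \<le> p" "p \<le> r" using assms(5,6) by (auto simp: le_fun_def intro: order.trans)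
  then have "y (0, r) = cmp G (y (0, p)) (cmp G (y (p, q)) (y (q, r)))"
    using inf_path_cmp[OF assms(1) NK_0 assms(2,4)] inf_path_cmp[OF assms(1-6)] by simp
  then show ?thesis
    using inf_path_segment[OF assms(1)] assms \<open>0 \<le> p\<close> unfolding factorises_def by auto
qed

lemma shift_neq_imp_separates:
  assumes y: "y \<in> inf_paths k G" and "m \<in> NK k" "n \<in> NK k" and ne: "shift k m y \<noteq> shift k n y"
  shows "\<exists>\<eta>. separates m n \<eta>"
proof -
  obtain P Q where PQ: "shift k m y (P, Q) \<noteq> shift k n y (P, Q)" using ne by (auto simp: fun_eq_iff)
  then have "(P, Q) \<in> Omega k" unfolding shift_def by (auto split: if_splits)
  then have PQ_NK: "P \<in> NK k" "Q \<in> NK k" and "P \<le> Q" by (auto simp: Omega_def)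
  have segments_differ: "y (m + P, m + Q) \<noteq> y (n + P, n + Q)"
    using PQ \<open>(P, Q) \<in> Omega k\<close> unfolding shift_def by simp
  define T where "T = m + n + Q"
  have NKs: "m + P \<in> NK k" "m + Q \<in> NK k" "n + P \<in> NK k" "n + Q \<in> NK k" "T \<in> NK k"
    using assms PQ_NK unfolding T_def NK_def by auto
  have le: "m + P \<le> m + Q" "n + P \<le> n + Q" "m + Q \<le> T" "n + Q \<le> T" "0 \<le> m + P" "0 \<le> n + P"
    using \<open>P \<le> Q\<close> unfolding T_def by (auto simp: le_fun_def)
  have f: "factorises (y (0, T)) (y (0, m + P)) (y (m + P, m + Q)) (y (m + Q, T))"
    "factorises (y (0, T)) (y (0, n + P)) (y (n + P, n + Q)) (y (n + Q, T))"
    using NKs le by (auto intro!: inf_path_factorises[OF y])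
  have d: "deg G (y (0, m + P)) + n = deg G (y (0, n + P)) + m"
    "deg G (y (m + P, m + Q)) = deg G (y (n + P, n + Q))"
    using inf_path_segment(2)[OF y] NKs le by (simp_all add: fun_eq_iff)
  show ?thesis
    unfolding separates_def by (intro exI conjI) (rule f d segments_differ)+
qed

lemma not_Per_imp_separates:
  assumes g: "g \<in> ZK k" "g \<notin> Per k G"
  obtains m n \<eta> where "m \<in> NK k" "n \<in> NK k" "g = (\<lambda>i. int (m i) - int (n i))" "separates m n \<eta>"
proof -
  define m where "m i = nat (g i)" for i
  define n where "n i = nat (- g i)" for i
  have NK: "m \<in> NK k" "n \<in> NK k" using g(1) unfolding m_def n_def NK_def ZK_def by auto
  have mn: "g = (\<lambda>i. int (m i) - int (n i))" unfolding m_def n_def by (simp add: fun_eq_iff)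
  have "\<exists>y\<in>inf_paths k G. shift k m y \<noteq> shift k n y"
  proof (rule ccontr)
    assume "\<not> (\<exists>y\<in>inf_paths k G. shift k m y \<noteq> shift k n y)"
    then have "g \<in> Per k G" using NK mn unfolding Per_def by blast
    with g(2) show False by simp
  qed
  then obtain y where "y \<in> inf_paths k G" "shift k m y \<noteq> shift k n y" by blast
  then obtain \<eta> where "separates m n \<eta>" using shift_neq_imp_separates NK by blast
  then show ?thesis using that NK mn by blast
qed

lemma separates_mor: "separates m n \<eta> \<Longrightarrow> \<eta> \<in> mor G"
  unfolding separates_def using factorisesD(6) by blast

lemma separates_deg_nonzero:
  assumes "separates m n \<eta>"
  shows "deg G \<eta> \<noteq> 0"
proof
  assume deg0: "deg G \<eta> = 0"
  obtain \<gamma> \<rho> \<xi> \<gamma>' \<rho>' \<xi>' where f: "factorises \<eta> \<gamma> \<rho> \<xi>" "factorises \<eta> \<gamma>' \<rho>' \<xi>'"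
    and "deg G \<rho> = deg G \<rho>'" "\<rho> \<noteq> \<rho>'"
    using assms unfolding separates_def by blast
  moreover have "deg G \<gamma> = deg G \<gamma>'"
    using factorisesD(9)[OF f(1)] factorisesD(9)[OF f(2)] deg0 by (simp add: fun_eq_iff)
  moreover have "cmp G \<gamma> (cmp G \<rho> \<xi>) = cmp G \<gamma>' (cmp G \<rho>' \<xi>')"
    using f unfolding factorises_def by simp
  ultimately show False
    using middle_cancel[of \<gamma> \<rho> \<xi> \<gamma>' \<rho>' \<xi>'] factorisesD(1-5)[OF f(1)] factorisesD(1-5)[OF f(2)]
    by simp
qed

text \<open>The segments of \<open>\<eta>\<close> sit at degrees differing by \<open>d(\<mu>) - d(\<nu>)\<close> inside \<open>\<mu>\<theta>\<eta>\<close>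
  and \<open>\<nu>\<theta>\<eta>\<close>, so a common extension would force them to coincide.\<close>

lemma separates_Lmin_empty:
  assumes sep: "separates m n \<eta>" and deg: "deg G \<mu> + n = deg G \<nu> + m"
    and mor: "\<mu> \<in> mor G" "\<nu> \<in> mor G" "\<theta> \<in> mor G" "\<tau> \<in> mor G"
    and comp: "src G \<mu> = rng G \<theta>" "src G \<nu> = rng G \<theta>" "src G \<theta> = rng G \<eta>" "rng G \<tau> = src G \<eta>"
  shows "Lmin G (cmp G \<mu> (cmp G \<theta> (cmp G \<eta> \<tau>))) (cmp G \<nu> (cmp G \<theta> (cmp G \<eta> \<tau>))) = {}"
proof (rule ccontr)
  obtain \<gamma> \<rho> \<xi> \<gamma>' \<rho>' \<xi>' where f: "factorises \<eta> \<gamma> \<rho> \<xi>" "factorises \<eta> \<gamma>' \<rho>' \<xi>'"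
    and deg_sep: "deg G \<gamma> + n = deg G \<gamma>' + m" and "deg G \<rho> = deg G \<rho>'" "\<rho> \<noteq> \<rho>'"
    using sep unfolding separates_def by blast
  note f1 = factorisesD[OF f(1)] and f2 = factorisesD[OF f(2)]
  assume "Lmin G (cmp G \<mu> (cmp G \<theta> (cmp G \<eta> \<tau>))) (cmp G \<nu> (cmp G \<theta> (cmp G \<eta> \<tau>))) \<noteq> {}"
  then obtain \<alpha> \<beta> where "\<alpha> \<in> mor G" "\<beta> \<in> mor G"
    "src G (cmp G \<mu> (cmp G \<theta> (cmp G \<eta> \<tau>))) = rng G \<alpha>"
    "src G (cmp G \<nu> (cmp G \<theta> (cmp G \<eta> \<tau>))) = rng G \<beta>"
    and ext_eq: "cmp G (cmp G \<mu> (cmp G \<theta> (cmp G \<eta> \<tau>))) \<alpha> = cmp G (cmp G \<nu> (cmp G \<theta> (cmp G \<eta> \<tau>))) \<beta>"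
    using Lmin_nonempty_iff_common_extension[of "cmp G \<mu> (cmp G \<theta> (cmp G \<eta> \<tau>))"
        "cmp G \<nu> (cmp G \<theta> (cmp G \<eta> \<tau>))"] f1(6) mor comp
    by (metis cmp_mor rng_cmp)
  then have ext: "\<alpha> \<in> mor G" "\<beta> \<in> mor G" "rng G \<alpha> = src G \<tau>" "rng G \<beta> = src G \<tau>"
    using f1(6) mor comp by simp_all
  have "cmp G (cmp G \<mu> (cmp G \<theta> (cmp G \<eta> \<tau>))) \<alpha> =
      cmp G (cmp G \<mu> (cmp G \<theta> \<gamma>')) (cmp G \<rho>' (cmp G \<xi>' (cmp G \<tau> \<alpha>)))"
    using f(2) f2(1-5,7,8) mor comp ext(1,3) unfolding factorises_def by simp
  moreover have "cmp G (cmp G \<nu> (cmp G \<theta> (cmp G \<eta> \<tau>))) \<beta> =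
      cmp G (cmp G \<nu> (cmp G \<theta> \<gamma>)) (cmp G \<rho> (cmp G \<xi> (cmp G \<tau> \<beta>)))"
    using f(1) f1(1-5,7,8) mor comp ext(2,4) unfolding factorises_def by simp
  moreover have "deg G \<mu> + (deg G \<theta> + deg G \<gamma>') = deg G \<nu> + (deg G \<theta> + deg G \<gamma>)"
  proof
    fix i show "(deg G \<mu> + (deg G \<theta> + deg G \<gamma>')) i = (deg G \<nu> + (deg G \<theta> + deg G \<gamma>)) i"
      using fun_cong[OF deg, of i] fun_cong[OF deg_sep, of i] by simp
  qed
  then have "deg G (cmp G \<mu> (cmp G \<theta> \<gamma>')) = deg G (cmp G \<nu> (cmp G \<theta> \<gamma>))"
    using f1(1,7) f2(1,7) mor comp by simp
  ultimately have "\<rho>' = \<rho>"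
    using middle_cancel[of "cmp G \<mu> (cmp G \<theta> \<gamma>')" \<rho>' "cmp G \<xi>' (cmp G \<tau> \<alpha>)"
        "cmp G \<nu> (cmp G \<theta> \<gamma>)" \<rho> "cmp G \<xi> (cmp G \<tau> \<beta>)"]
      f1(1-5,7,8) f2(1-5,7,8) mor comp ext ext_eq \<open>deg G \<rho> = deg G \<rho>'\<close>
    by simp
  with \<open>\<rho> \<noteq> \<rho>'\<close> show False by simp
qed

definition paths_of_deg_at :: "'a \<Rightarrow> (nat \<Rightarrow> nat) \<Rightarrow> 'a set" where
  "paths_of_deg_at v d = {l \<in> paths_of_deg G d. rng G l = v}"

lemma paths_of_deg_atD:
  "l \<in> paths_of_deg_at v d \<Longrightarrow> l \<in> mor G \<and> rng G l = v \<and> deg G l = d"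
  unfolding paths_of_deg_at_def paths_of_deg_def by simp

lemma cyl_disjoint: "deg G l = deg G l' \<Longrightarrow> l \<noteq> l' \<Longrightarrow> cyl k G l \<inter> cyl k G l' = {}"
  unfolding cyl_def by auto

lemma cyl_cmp_subset:
  assumes "\<kappa> \<in> mor G" "t \<in> mor G" "src G \<kappa> = rng G t"
  shows "cyl k G (cmp G \<kappa> t) \<subseteq> cyl k G \<kappa>"
proof
  fix y assume "y \<in> cyl k G (cmp G \<kappa> t)"
  then have y: "y \<in> inf_paths k G" and y0: "y (0, deg G \<kappa> + deg G t) = cmp G \<kappa> t"
    using assms unfolding cyl_def by auto
  have NK: "deg G \<kappa> \<in> NK k" "deg G t \<in> NK k" using assms deg_in_NK by auto
  have le: "0 \<le> deg G \<kappa>" "deg G \<kappa> \<le> deg G \<kappa> + deg G t" by (simp_all add: le_fun_def)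
  note seg1 = inf_path_segment[OF y NK_0 NK(1) le(1)]
    and seg2 = inf_path_segment[OF y NK(1) NK_add[OF NK] le(2)]
  have "cmp G (y (0, deg G \<kappa>)) (y (deg G \<kappa>, deg G \<kappa> + deg G t)) = cmp G \<kappa> t"
    using inf_path_cmp[OF y NK_0 NK(1) NK_add[OF NK] le] y0 by simp
  moreover have "deg G (y (0, deg G \<kappa>)) = deg G \<kappa>"
    "deg G (y (deg G \<kappa>, deg G \<kappa> + deg G t)) = deg G t"
    using seg1(2) seg2(2) by (simp_all add: fun_eq_iff)
  moreover have "src G (y (0, deg G \<kappa>)) = rng G (y (deg G \<kappa>, deg G \<kappa> + deg G t))"
    using seg1(4) seg2(3) by simp
  ultimately have "y (0, deg G \<kappa>) = \<kappa>"
    using factorisation_unique[OF seg1(1) seg2(1) _ assms] by blast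
  then show "y \<in> cyl k G \<kappa>" using y unfolding cyl_def by simp
qed

lemma cyl_eq_Union_extensions:
  assumes "\<kappa> \<in> mor G" "d \<in> NK k"
  shows "cyl k G \<kappa> = (\<Union>t\<in>paths_of_deg_at (src G \<kappa>) d. cyl k G (cmp G \<kappa> t))"
proof
  show "(\<Union>t\<in>paths_of_deg_at (src G \<kappa>) d. cyl k G (cmp G \<kappa> t)) \<subseteq> cyl k G \<kappa>"
  proof (rule UN_least)
    fix t assume "t \<in> paths_of_deg_at (src G \<kappa>) d"
    then show "cyl k G (cmp G \<kappa> t) \<subseteq> cyl k G \<kappa>"
      using cyl_cmp_subset[OF assms(1)] paths_of_deg_atD by simp
  qed
next
  show "cyl k G \<kappa> \<subseteq> (\<Union>t\<in>paths_of_deg_at (src G \<kappa>) d. cyl k G (cmp G \<kappa> t))"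
  proof
    fix y assume "y \<in> cyl k G \<kappa>"
    then have y: "y \<in> inf_paths k G" and y0: "y (0, deg G \<kappa>) = \<kappa>" unfolding cyl_def by auto
    have NK: "deg G \<kappa> \<in> NK k" using assms deg_in_NK by auto
    have le: "0 \<le> deg G \<kappa>" "deg G \<kappa> \<le> deg G \<kappa> + d" by (simp_all add: le_fun_def)
    define t where "t = y (deg G \<kappa>, deg G \<kappa> + d)"
    have "y (0, deg G \<kappa> + d) = cmp G \<kappa> t"
      unfolding t_def using inf_path_cmp[OF y NK_0 NK NK_add[OF NK assms(2)] le] y0 by simp
    moreover have t: "t \<in> mor G" "deg G t = d" "rng G t = src G \<kappa>"
      unfolding t_def using inf_path_segment[OF y NK NK_add[OF NK assms(2)] le(2)] inf_path_segment[OF y NK_0 NK le(1)] assms y0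
      by (simp_all add: fun_eq_iff)
    ultimately have "y \<in> cyl k G (cmp G \<kappa> t)" using y assms(1) unfolding cyl_def by simp
    moreover have "t \<in> paths_of_deg_at (src G \<kappa>) d"
      using t unfolding paths_of_deg_at_def paths_of_deg_def by simp
    ultimately show "y \<in> (\<Union>t\<in>paths_of_deg_at (src G \<kappa>) d. cyl k G (cmp G \<kappa> t))" by blast
  qed
qed

end

locale connected_k_graph = k_graph +
  assumes standing_conv: "standing_conv k G"
    and finite_kgraph: "finite_kgraph G"
    and strongly_connected: "strongly_connected G"
begin

lemma finite_paths_of_deg: "finite (paths_of_deg G d)"
  using finite_kgraph unfolding finite_kgraph_def by blast

lemma finite_verts: "finite (verts G)"
proof (rule finite_subset[OF _ finite_paths_of_deg])
  show "verts G \<subseteq> paths_of_deg G 0"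
  proof
    fix v assume "v \<in> verts G"
    then have "v \<in> mor G" "rng G v = v" by (simp_all add: verts_iff)
    moreover have "deg G v = 0" using deg_rng[of v] calculation by simp
    ultimately show "v \<in> paths_of_deg G 0" unfolding paths_of_deg_def by simp
  qed
qed

lemma edge_exists:
  assumes "i < k" "v \<in> verts G"
  shows "\<exists>e\<in>mor G. rng G e = v \<and> deg G e = unitvec i"
proof -
  obtain e where e: "e \<in> mor G" "deg G e = unitvec i"
    using standing_conv assms(1) unfolding standing_conv_def paths_of_deg_def by auto
  obtain t where t: "t \<in> mor G" "rng G t = v" "src G t = rng G e"
    using strongly_connected assms(2) e(1) unfolding strongly_connected_def by (meson rng_in_verts)
  have "cmp G t e \<in> mor G" "deg G (cmp G t e) = unitvec i + deg G t" using t e by (simp_all add: add.commute)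
  then obtain e' t' where e': "e' \<in> mor G" "t' \<in> mor G" "src G e' = rng G t'" "deg G e' = unitvec i"
    and eq: "cmp G e' t' = cmp G t e"
    by (rule factorisation_exists)
  have "rng G e' = rng G (cmp G t e)" using e' by (simp flip: eq)
  then have "rng G e' = v" using t e by simp
  then show ?thesis using e' by blast
qed

lemma path_exists:
  assumes "d \<in> NK k" "v \<in> verts G"
  shows "\<exists>\<xi>\<in>mor G. rng G \<xi> = v \<and> deg G \<xi> = d"
  using assms
proof (induction "sum d {..<k}" arbitrary: d v)
  case 0
  have "d i = 0" for i
    using 0 by (cases "i < k") (simp_all add: NK_def)
  then have "d = 0" by auto
  moreover have "v \<in> mor G" "rng G v = v" using 0 by (simp_all add: verts_iff)
  moreover have "deg G v = 0" using deg_rng[of v] calculation(2,3) by simp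
  ultimately show ?case by blast
next
  case (Suc s)
  have "\<exists>i\<in>{..<k}. 0 < d i"
  proof (rule ccontr)
    assume "\<not> (\<exists>i\<in>{..<k}. 0 < d i)"
    then have "sum d {..<k} = 0" by simp
    with Suc.hyps(2) show False by simp
  qed
  then obtain i where i: "i < k" "0 < d i" by blast
  define d' where "d' = d(i := d i - 1)"
  have d_eq: "d = d' + unitvec i" using i by (auto simp: d'_def unitvec_def fun_eq_iff)
  have "d' \<in> NK k" using Suc.prems(1) i by (auto simp: d'_def NK_def)
  moreover have "sum d' {..<k} = s"
  proof -
    have "sum d {..<k} = sum d' {..<k} + sum (unitvec i) {..<k}" by (simp add: d_eq sum.distrib)
    also have "sum (unitvec i) {..<k} = 1" using i by (simp add: unitvec_def)
    finally show ?thesis using Suc.hyps(2) by simp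
  qed
  ultimately obtain \<xi> where \<xi>: "\<xi> \<in> mor G" "rng G \<xi> = v" "deg G \<xi> = d'"
    using Suc.hyps(1) Suc.prems(2) by blast
  obtain e where e: "e \<in> mor G" "rng G e = src G \<xi>" "deg G e = unitvec i"
    using edge_exists[OF i(1), of "src G \<xi>"] \<xi>(1) by auto
  have "cmp G \<xi> e \<in> mor G" "rng G (cmp G \<xi> e) = v" "deg G (cmp G \<xi> e) = d"
    using \<xi> e d_eq by simp_all
  then show ?case by blast
qed

lemma paths_through_of_uniform_degree:
  assumes \<eta>: "\<eta> \<in> mor G"
  obtains a where "a \<in> NK k" "deg G \<eta> \<le> a"
    and "\<And>v. v \<in> verts G \<Longrightarrow> \<exists>\<theta>\<in>mor G. \<exists>\<tau>\<in>mor G. rng G \<theta> = v \<and> src G \<theta> = rng G \<eta> \<and>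
      rng G \<tau> = src G \<eta> \<and> deg G \<theta> + deg G \<eta> + deg G \<tau> = a"
proof -
  have "\<forall>v\<in>verts G. \<exists>\<theta>. \<theta> \<in> mor G \<and> rng G \<theta> = v \<and> src G \<theta> = rng G \<eta>"
    using strongly_connected \<eta> unfolding strongly_connected_def by (meson rng_in_verts)
  then obtain \<theta> where "\<forall>v\<in>verts G. \<theta> v \<in> mor G \<and> rng G (\<theta> v) = v \<and> src G (\<theta> v) = rng G \<eta>"
    by (rule bchoice[THEN exE])
  then have \<theta>: "\<theta> v \<in> mor G \<and> rng G (\<theta> v) = v \<and> src G (\<theta> v) = rng G \<eta>" if "v \<in> verts G" for v
    using that by blast
  have "(\<lambda>v. deg G (\<theta> v) + deg G \<eta>) ` verts G \<subseteq> NK k" using \<theta> \<eta> deg_in_NK by auto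
  from NK_finite_upper_bound[OF finite_imageI[OF finite_verts] this]
  obtain a where a: "a \<in> NK k" "\<forall>d\<in>(\<lambda>v. deg G (\<theta> v) + deg G \<eta>) ` verts G. d \<le> a" ..
  then have a_bound: "deg G (\<theta> v) + deg G \<eta> \<le> a" if "v \<in> verts G" for v
    using that by blast
  show ?thesis
  proof (rule that[OF a(1)])
    have "deg G \<eta> \<le> deg G (\<theta> (rng G \<eta>)) + deg G \<eta>" by (simp add: le_fun_def)
    then show "deg G \<eta> \<le> a" using a_bound \<eta> by (meson order.trans rng_in_verts)
  next
    fix v assume v: "v \<in> verts G"
    have "a - (deg G (\<theta> v) + deg G \<eta>) \<in> NK k" using a(1) by (simp add: NK_def)
    then obtain \<tau> where \<tau>: "\<tau> \<in> mor G" "rng G \<tau> = src G \<eta>" "deg G \<tau> = a - (deg G (\<theta> v) + deg G \<eta>)"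
      using path_exists \<eta> by (meson src_in_verts)
    have "deg G (\<theta> v) + deg G \<eta> + deg G \<tau> = a" using a_bound[OF v] \<tau>(3) by (auto simp: le_fun_def fun_eq_iff)
    then show "\<exists>\<theta>\<in>mor G. \<exists>\<tau>\<in>mor G. rng G \<theta> = v \<and> src G \<theta> = rng G \<eta> \<and>
      rng G \<tau> = src G \<eta> \<and> deg G \<theta> + deg G \<eta> + deg G \<tau> = a"
      using \<theta>[OF v] \<tau> by blast
  qed
qed

lemma separates_escape_paths:
  assumes sep: "separates m n \<eta>"
  obtains a where "a \<in> NK k" "a \<noteq> 0"
    and "\<And>\<mu> \<nu> l. \<mu> \<in> mor G \<Longrightarrow> \<nu> \<in> mor G \<Longrightarrow> src G \<mu> = src G \<nu> \<Longrightarrow> deg G \<mu> + n = deg G \<nu> + m \<Longrightarrow>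
      l \<in> mor G \<Longrightarrow> rng G l = src G \<mu> \<Longrightarrow>
      \<exists>p\<in>mor G. rng G p = src G l \<and> deg G p = a \<and> Lmin G (cmp G \<mu> (cmp G l p)) (cmp G \<nu> (cmp G l p)) = {}"
proof -
  have \<eta>: "\<eta> \<in> mor G" by (rule separates_mor[OF sep])
  obtain a where a: "a \<in> NK k" "deg G \<eta> \<le> a"
    and through: "\<And>v. v \<in> verts G \<Longrightarrow> \<exists>\<theta>\<in>mor G. \<exists>\<tau>\<in>mor G. rng G \<theta> = v \<and> src G \<theta> = rng G \<eta> \<and>
      rng G \<tau> = src G \<eta> \<and> deg G \<theta> + deg G \<eta> + deg G \<tau> = a"
    using paths_through_of_uniform_degree[OF \<eta>] by blast
  have "a \<noteq> 0"
  proof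
    assume "a = 0"
    with a(2) have "deg G \<eta> = 0" by (auto simp: le_fun_def fun_eq_iff)
    with separates_deg_nonzero[OF sep] show False by simp
  qed
  then show ?thesis
  proof (rule that[OF a(1)])
    fix \<mu> \<nu> l assume \<mu>\<nu>: "\<mu> \<in> mor G" "\<nu> \<in> mor G" "src G \<mu> = src G \<nu>" "deg G \<mu> + n = deg G \<nu> + m"
      and l: "l \<in> mor G" "rng G l = src G \<mu>"
    obtain \<theta> \<tau> where \<theta>\<tau>: "\<theta> \<in> mor G" "\<tau> \<in> mor G" "rng G \<theta> = src G l" "src G \<theta> = rng G \<eta>"
      "rng G \<tau> = src G \<eta>" "deg G \<theta> + deg G \<eta> + deg G \<tau> = a"
      using through[of "src G l"] l by auto
    have "Lmin G (cmp G \<mu> (cmp G (cmp G l \<theta>) (cmp G \<eta> \<tau>))) (cmp G \<nu> (cmp G (cmp G l \<theta>) (cmp G \<eta> \<tau>))) = {}"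
      by (rule separates_Lmin_empty[OF sep \<mu>\<nu>(4)]) (use \<mu>\<nu> l \<theta>\<tau> in simp_all)
    moreover have "cmp G (cmp G l \<theta>) (cmp G \<eta> \<tau>) = cmp G l (cmp G \<theta> (cmp G \<eta> \<tau>))"
      using l \<theta>\<tau> \<eta> by simp
    ultimately have "Lmin G (cmp G \<mu> (cmp G l (cmp G \<theta> (cmp G \<eta> \<tau>))))
        (cmp G \<nu> (cmp G l (cmp G \<theta> (cmp G \<eta> \<tau>)))) = {}"
      by simp
    moreover have "cmp G \<theta> (cmp G \<eta> \<tau>) \<in> mor G" "rng G (cmp G \<theta> (cmp G \<eta> \<tau>)) = src G l"
      "deg G (cmp G \<theta> (cmp G \<eta> \<tau>)) = a"
      using \<theta>\<tau> \<eta> by (simp_all add: add.assoc)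
    ultimately show "\<exists>p\<in>mor G. rng G p = src G l \<and> deg G p = a \<and>
        Lmin G (cmp G \<mu> (cmp G l p)) (cmp G \<nu> (cmp G l p)) = {}"
      by blast
  qed
qed

end

locale k_graph_measure = connected_k_graph +
  fixes x :: "'a \<Rightarrow> real" and M :: "((nat \<Rightarrow> nat) \<times> (nat \<Rightarrow> nat) \<Rightarrow> 'a) measure"
  assumes PF_vector: "is_PF_vector k G x"
    and prob_space: "prob_space M"
    and sets_M: "sets M = path_borel_sets k G"
    and measure_cyl_PF: "\<And>l. l \<in> mor G \<Longrightarrow>
      measure M (cyl k G l) = (\<Prod>i<k. inverse (rho G i) ^ deg G l i) * x (src G l)"
begin

interpretation M: prob_space M by (rule prob_space)

definition rho_pow_inv :: "(nat \<Rightarrow> nat) \<Rightarrow> real" where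
  "rho_pow_inv d = (\<Prod>i<k. inverse (rho G i) ^ d i)"

lemma measure_cyl: "l \<in> mor G \<Longrightarrow> measure M (cyl k G l) = rho_pow_inv (deg G l) * x (src G l)"
  using measure_cyl_PF unfolding rho_pow_inv_def by simp

lemma rho_pow_inv_add: "rho_pow_inv (d + d') = rho_pow_inv d * rho_pow_inv d'"
  unfolding rho_pow_inv_def by (simp add: power_add prod.distrib)

lemma rho_pow_inv_0 [simp]: "rho_pow_inv 0 = 1"
  unfolding rho_pow_inv_def by simp

lemma cyl_in_sets: "l \<in> mor G \<Longrightarrow> cyl k G l \<in> sets M"
  unfolding sets_M path_borel_sets_def path_topology_def
  by (rule sigma_sets.Basic) (simp add: topology_generated_by_Basis)

lemma finite_paths_of_deg_at: "finite (paths_of_deg_at v d)"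
  by (rule finite_subset[OF _ finite_paths_of_deg[of d]]) (auto simp: paths_of_deg_at_def)

lemma measure_Union_cyl_extensions:
  assumes \<kappa>: "\<kappa> \<in> mor G" and S: "S \<subseteq> paths_of_deg_at (src G \<kappa>) d"
  shows "measure M (\<Union>t\<in>S. cyl k G (cmp G \<kappa> t)) = (\<Sum>t\<in>S. measure M (cyl k G (cmp G \<kappa> t)))"
proof (rule M.finite_measure_finite_Union)
  show "finite S" using S finite_paths_of_deg_at by (rule finite_subset)
  show "(\<lambda>t. cyl k G (cmp G \<kappa> t)) ` S \<subseteq> sets M"
  proof (rule image_subsetI)
    fix t assume "t \<in> S"
    then show "cyl k G (cmp G \<kappa> t) \<in> sets M"
      using S \<kappa> paths_of_deg_atD[of t] by (intro cyl_in_sets) auto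
  qed
  show "disjoint_family_on (\<lambda>t. cyl k G (cmp G \<kappa> t)) S"
    unfolding disjoint_family_on_def
  proof (intro ballI impI)
    fix t t' assume "t \<in> S" "t' \<in> S" "t \<noteq> t'"
    then have t: "t \<in> mor G" "rng G t = src G \<kappa>" "deg G t = d"
      and t': "t' \<in> mor G" "rng G t' = src G \<kappa>" "deg G t' = d"
      using S paths_of_deg_atD by blast+
    have "cmp G \<kappa> t \<noteq> cmp G \<kappa> t'"
      using left_cancel[OF \<kappa> t(1) t'(1)] t(2,3) t'(2,3) \<open>t \<noteq> t'\<close> by metis
    moreover have "deg G (cmp G \<kappa> t) = deg G (cmp G \<kappa> t')" using t t' \<kappa> by simp
    ultimately show "cyl k G (cmp G \<kappa> t) \<inter> cyl k G (cmp G \<kappa> t') = {}"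
      by (rule cyl_disjoint[rotated])
  qed
qed

lemma measure_cyl_eq_sum_extensions:
  assumes "\<kappa> \<in> mor G" "d \<in> NK k"
  shows "measure M (cyl k G \<kappa>) = (\<Sum>t\<in>paths_of_deg_at (src G \<kappa>) d. measure M (cyl k G (cmp G \<kappa> t)))"
  using measure_Union_cyl_extensions[OF assms(1) order.refl]
  by (subst cyl_eq_Union_extensions[OF assms])

lemma x_nonneg: "v \<in> verts G \<Longrightarrow> 0 \<le> x v"
  and sum_x: "(\<Sum>v\<in>verts G. x v) = 1"
  using PF_vector unfolding is_PF_vector_def by auto

lemma x_le_1:
  assumes "v \<in> verts G"
  shows "x v \<le> 1"
proof -
  have "x v \<le> (\<Sum>v\<in>verts G. x v)"
    using assms x_nonneg by (intro member_le_sum[OF _ _ finite_verts]) auto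
  then show ?thesis using sum_x by simp
qed

lemma x_eq_sum_extensions:
  assumes v: "v \<in> verts G" and d: "d \<in> NK k"
  shows "x v = rho_pow_inv d * (\<Sum>t\<in>paths_of_deg_at v d. x (src G t))"
proof -
  have v_mor: "v \<in> mor G" "rng G v = v" using v by (simp_all add: verts_iff)
  have v_src: "src G v = v" "deg G v = 0"
    using src_rng[OF v_mor(1)] deg_rng[OF v_mor(1)] unfolding v_mor(2) by simp_all
  have "x v = measure M (cyl k G v)" using measure_cyl[OF v_mor(1)] v_src by simp
  also have "\<dots> = (\<Sum>t\<in>paths_of_deg_at v d. measure M (cyl k G (cmp G v t)))"
    using measure_cyl_eq_sum_extensions[OF v_mor(1) d] v_src by simp
  also have "\<dots> = (\<Sum>t\<in>paths_of_deg_at v d. rho_pow_inv d * x (src G t))"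
  proof (rule sum.cong[OF refl])
    fix t assume "t \<in> paths_of_deg_at v d"
    then have t: "t \<in> mor G" "rng G t = v" "deg G t = d" using paths_of_deg_atD by blast+
    then have "cmp G v t = t" using cmp_rng_left[of t] by simp
    then show "measure M (cyl k G (cmp G v t)) = rho_pow_inv d * x (src G t)"
      using measure_cyl t by simp
  qed
  also have "\<dots> = rho_pow_inv d * (\<Sum>t\<in>paths_of_deg_at v d. x (src G t))"
    by (simp add: sum_distrib_left)
  finally show ?thesis .
qed

lemma ex_x_pos: "\<exists>u\<in>verts G. 0 < x u"
proof (rule ccontr)
  assume "\<not> (\<exists>u\<in>verts G. 0 < x u)"
  then have "\<forall>v\<in>verts G. x v = 0" using x_nonneg by force
  then show False using sum_x by simp
qed

lemma sum_extensions_nonneg: "0 \<le> (\<Sum>t\<in>paths_of_deg_at v d. x (src G t))"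
proof (rule sum_nonneg)
  fix t assume "t \<in> paths_of_deg_at v d"
  then have "t \<in> mor G" using paths_of_deg_atD by blast
  then show "0 \<le> x (src G t)" using x_nonneg by simp
qed

text \<open>Positivity of \<open>\<rho>(\<Lambda>)\<^sup>-\<^sup>d\<close> is read off the measures of the vertex cylinders, not derived
  from the spectral radii themselves.\<close>

lemma rho_pow_inv_pos:
  assumes d: "d \<in> NK k"
  shows "0 < rho_pow_inv d"
proof -
  obtain u where u: "u \<in> verts G" "0 < x u" using ex_x_pos by blast
  then have "0 < rho_pow_inv d * (\<Sum>t\<in>paths_of_deg_at u d. x (src G t))"
    using x_eq_sum_extensions[OF u(1) d] by simp
  then show ?thesis using sum_extensions_nonneg[of u d] by (auto simp: zero_less_mult_iff)
qed

lemma x_pos: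
  assumes w: "w \<in> verts G"
  shows "0 < x w"
proof -
  obtain u where u: "u \<in> verts G" "0 < x u" using ex_x_pos by blast
  obtain \<tau> where \<tau>: "\<tau> \<in> mor G" "rng G \<tau> = w" "src G \<tau> = u"
    using strongly_connected w u(1) unfolding strongly_connected_def by blast
  have "\<tau> \<in> paths_of_deg_at w (deg G \<tau>)"
    using \<tau> unfolding paths_of_deg_at_def paths_of_deg_def by simp
  then have "x (src G \<tau>) \<le> (\<Sum>t\<in>paths_of_deg_at w (deg G \<tau>). x (src G t))"
  proof (rule member_le_sum[OF _ _ finite_paths_of_deg_at])
    fix t assume "t \<in> paths_of_deg_at w (deg G \<tau>) - {\<tau>}"
    then have "t \<in> mor G" using paths_of_deg_atD by blast
    then show "0 \<le> x (src G t)" using x_nonneg by simp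
  qed
  then have "0 < (\<Sum>t\<in>paths_of_deg_at w (deg G \<tau>). x (src G t))" using u(2) \<tau>(3) by (metis less_le_trans)
  then show ?thesis
    using x_eq_sum_extensions[OF w deg_in_NK[OF \<tau>(1)]] rho_pow_inv_pos[OF deg_in_NK[OF \<tau>(1)]] by simp
qed

definition x_min :: real where
  "x_min = Min (x ` verts G)"

lemma x_min_le: "v \<in> verts G \<Longrightarrow> x_min \<le> x v"
  unfolding x_min_def using finite_verts by simp

lemma x_min_pos: "0 < x_min"
proof -
  have "verts G \<noteq> {}" using sum_x by auto
  then have "x_min \<in> x ` verts G" unfolding x_min_def using finite_verts by simp
  then show ?thesis using x_pos by auto
qed

lemma measure_cyl_cmp_ge:
  assumes \<kappa>: "\<kappa> \<in> mor G" and t: "t \<in> mor G" and "src G \<kappa> = rng G t"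
  shows "rho_pow_inv (deg G t) * x_min * measure M (cyl k G \<kappa>) \<le> measure M (cyl k G (cmp G \<kappa> t))"
proof -
  have pos: "0 < rho_pow_inv (deg G \<kappa>)" "0 < rho_pow_inv (deg G t)"
    using rho_pow_inv_pos[OF deg_in_NK[OF \<kappa>]] rho_pow_inv_pos[OF deg_in_NK[OF t]] .
  have "rho_pow_inv (deg G t) * x_min * measure M (cyl k G \<kappa>) =
      rho_pow_inv (deg G \<kappa>) * rho_pow_inv (deg G t) * x_min * x (src G \<kappa>)"
    using measure_cyl[OF \<kappa>] by simp
  also have "\<dots> \<le> rho_pow_inv (deg G \<kappa>) * rho_pow_inv (deg G t) * x_min"
    using pos x_min_pos x_le_1[of "src G \<kappa>"] \<kappa> by (intro mult_left_le) simp_all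
  also have "\<dots> \<le> rho_pow_inv (deg G \<kappa>) * rho_pow_inv (deg G t) * x (src G t)"
    using pos x_min_le[of "src G t"] t by (intro mult_left_mono) simp_all
  also have "\<dots> = measure M (cyl k G (cmp G \<kappa> t))"
    using measure_cyl[of "cmp G \<kappa> t"] assms by (simp add: rho_pow_inv_add)
  finally show ?thesis .
qed

lemma measure_cyl_diff_cmp_le:
  assumes \<kappa>: "\<kappa> \<in> mor G" and t: "t \<in> mor G" and "src G \<kappa> = rng G t"
  shows "measure M (cyl k G \<kappa> - cyl k G (cmp G \<kappa> t))
    \<le> (1 - rho_pow_inv (deg G t) * x_min) * measure M (cyl k G \<kappa>)"
proof -
  have "measure M (cyl k G \<kappa> - cyl k G (cmp G \<kappa> t)) = measure M (cyl k G \<kappa>) - measure M (cyl k G (cmp G \<kappa> t))"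
    using assms by (intro M.finite_measure_Diff cyl_in_sets cyl_cmp_subset) simp_all
  then show ?thesis using measure_cyl_cmp_ge[OF assms] by (simp add: algebra_simps)
qed

context
  fixes \<mu> :: 'a and a :: "nat \<Rightarrow> nat" and P :: "'a \<Rightarrow> bool"
  assumes \<mu>: "\<mu> \<in> mor G"
    and prefix_closed: "\<And>l l'. l \<in> mor G \<Longrightarrow> l' \<in> mor G \<Longrightarrow> rng G l = src G \<mu> \<Longrightarrow>
      src G l = rng G l' \<Longrightarrow> deg G l' = a \<Longrightarrow> P (cmp G l l') \<Longrightarrow> P l"
begin

lemma extensions_cover:
  assumes p: "\<And>l. l \<in> mor G \<Longrightarrow> rng G l = src G \<mu> \<Longrightarrow>
    p l \<in> mor G \<and> rng G (p l) = src G l \<and> deg G (p l) = a \<and> \<not> P (cmp G l (p l))"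
  shows "(\<Union>l\<in>{l \<in> paths_of_deg_at (src G \<mu>) (\<lambda>i. Suc j * a i). P l}. cyl k G (cmp G \<mu> l))
    \<subseteq> (\<Union>l\<in>{l \<in> paths_of_deg_at (src G \<mu>) (\<lambda>i. j * a i). P l}.
          cyl k G (cmp G \<mu> l) - cyl k G (cmp G \<mu> (cmp G l (p l))))"
proof
  fix z assume "z \<in> (\<Union>l\<in>{l \<in> paths_of_deg_at (src G \<mu>) (\<lambda>i. Suc j * a i). P l}. cyl k G (cmp G \<mu> l))"
  then obtain l2 where "l2 \<in> paths_of_deg_at (src G \<mu>) (\<lambda>i. Suc j * a i)" "P l2"
    and z: "z \<in> cyl k G (cmp G \<mu> l2)" by blast
  then have l2: "l2 \<in> mor G" "rng G l2 = src G \<mu>" "deg G l2 = (\<lambda>i. Suc j * a i)" "P l2"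
    using paths_of_deg_atD by blast+
  have "deg G l2 = (\<lambda>i. j * a i) + a" using l2(3) by (simp add: fun_eq_iff)
  then obtain l l' where f: "l \<in> mor G" "l' \<in> mor G" "src G l = rng G l'"
    "deg G l = (\<lambda>i. j * a i)" "deg G l' = a" and l2_eq: "cmp G l l' = l2"
    by (rule factorisation_exists[OF l2(1)])
  have rl: "rng G l = src G \<mu>" using l2(2) f(1-3) by (simp flip: l2_eq)
  have "P l" using prefix_closed[OF f(1,2) rl f(3,5)] l2(4) l2_eq by simp
  then have l_live: "l \<in> {l \<in> paths_of_deg_at (src G \<mu>) (\<lambda>i. j * a i). P l}"
    using f(1,4) rl unfolding paths_of_deg_at_def paths_of_deg_def by simp
  have l2_assoc: "cmp G \<mu> l2 = cmp G (cmp G \<mu> l) l'" using \<mu> f(1-3) rl by (simp flip: l2_eq)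
  have "cyl k G (cmp G (cmp G \<mu> l) l') \<subseteq> cyl k G (cmp G \<mu> l)"
    by (rule cyl_cmp_subset) (use \<mu> f(1-3) rl in simp_all)
  then have "z \<in> cyl k G (cmp G \<mu> l)" using z unfolding l2_assoc by blast
  moreover have "z \<notin> cyl k G (cmp G \<mu> (cmp G l (p l)))"
  proof
    assume z': "z \<in> cyl k G (cmp G \<mu> (cmp G l (p l)))"
    note pl = p[OF f(1) rl]
    have lp: "cmp G l (p l) \<in> mor G" "rng G (cmp G l (p l)) = src G \<mu>" using f(1) pl rl by simp_all
    have deg_eq: "deg G l2 = deg G (cmp G l (p l))" using f pl by (simp flip: l2_eq)
    then have "deg G (cmp G \<mu> l2) = deg G (cmp G \<mu> (cmp G l (p l)))" using \<mu> l2(1,2) lp by simp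
    moreover have "cyl k G (cmp G \<mu> l2) \<inter> cyl k G (cmp G \<mu> (cmp G l (p l))) \<noteq> {}"
      using z z' by blast
    ultimately have "cmp G \<mu> l2 = cmp G \<mu> (cmp G l (p l))" using cyl_disjoint by blast
    then have "l2 = cmp G l (p l)"
      by (rule left_cancel[OF \<mu> l2(1) lp(1) l2(2)[symmetric] lp(2)[symmetric] _ deg_eq])
    then show False using l2(4) pl by simp
  qed
  ultimately show "z \<in> (\<Union>l\<in>{l \<in> paths_of_deg_at (src G \<mu>) (\<lambda>i. j * a i). P l}.
      cyl k G (cmp G \<mu> l) - cyl k G (cmp G \<mu> (cmp G l (p l))))"
    using l_live by blast
qed

lemma measure_extensions_step:
  assumes escape: "\<And>l. l \<in> mor G \<Longrightarrow> rng G l = src G \<mu> \<Longrightarrow>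
    \<exists>p\<in>mor G. rng G p = src G l \<and> deg G p = a \<and> \<not> P (cmp G l p)"
  shows "measure M (\<Union>l\<in>{l \<in> paths_of_deg_at (src G \<mu>) (\<lambda>i. Suc j * a i). P l}. cyl k G (cmp G \<mu> l))
    \<le> (1 - rho_pow_inv a * x_min) *
      measure M (\<Union>l\<in>{l \<in> paths_of_deg_at (src G \<mu>) (\<lambda>i. j * a i). P l}. cyl k G (cmp G \<mu> l))"
proof -
  let ?S = "{l \<in> paths_of_deg_at (src G \<mu>) (\<lambda>i. j * a i). P l}"
  have "\<forall>l. \<exists>p. l \<in> mor G \<and> rng G l = src G \<mu> \<longrightarrow>
      p \<in> mor G \<and> rng G p = src G l \<and> deg G p = a \<and> \<not> P (cmp G l p)"
    using escape by blast
  then obtain p where "\<forall>l. l \<in> mor G \<and> rng G l = src G \<mu> \<longrightarrow>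
      p l \<in> mor G \<and> rng G (p l) = src G l \<and> deg G (p l) = a \<and> \<not> P (cmp G l (p l))"
    by (rule choice[THEN exE])
  then have p: "p l \<in> mor G \<and> rng G (p l) = src G l \<and> deg G (p l) = a \<and> \<not> P (cmp G l (p l))"
    if "l \<in> mor G" "rng G l = src G \<mu>" for l
    using that by blast
  define D where "D l = cyl k G (cmp G \<mu> l) - cyl k G (cmp G \<mu> (cmp G l (p l)))" for l
  have D: "D l \<in> sets M" "measure M (D l) \<le> (1 - rho_pow_inv a * x_min) * measure M (cyl k G (cmp G \<mu> l))"
    if "l \<in> ?S" for l
  proof -
    have l: "l \<in> mor G" "rng G l = src G \<mu>" using that paths_of_deg_atD by blast+
    note pl = p[OF l]
    have "D l = cyl k G (cmp G \<mu> l) - cyl k G (cmp G (cmp G \<mu> l) (p l))"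
      unfolding D_def using \<mu> l pl by simp
    then show "D l \<in> sets M" "measure M (D l) \<le> (1 - rho_pow_inv a * x_min) * measure M (cyl k G (cmp G \<mu> l))"
      using measure_cyl_diff_cmp_le[of "cmp G \<mu> l" "p l"] cyl_in_sets \<mu> l pl by auto
  qed
  have fin: "finite ?S" using finite_paths_of_deg_at by (rule rev_finite_subset) auto
  have "measure M (\<Union>l\<in>{l \<in> paths_of_deg_at (src G \<mu>) (\<lambda>i. Suc j * a i). P l}. cyl k G (cmp G \<mu> l))
      \<le> measure M (\<Union>l\<in>?S. D l)"
    unfolding D_def using extensions_cover[OF p] D(1) fin
    by (intro M.finite_measure_mono) (auto simp: D_def)
  also have "\<dots> \<le> (\<Sum>l\<in>?S. measure M (D l))"
    using D(1) by (intro M.finite_measure_subadditive_finite[OF fin]) auto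
  also have "\<dots> \<le> (\<Sum>l\<in>?S. (1 - rho_pow_inv a * x_min) * measure M (cyl k G (cmp G \<mu> l)))"
    using D(2) by (rule sum_mono)
  also have "\<dots> = (1 - rho_pow_inv a * x_min) * measure M (\<Union>l\<in>?S. cyl k G (cmp G \<mu> l))"
    using measure_Union_cyl_extensions[OF \<mu>, of ?S "\<lambda>i. j * a i"] by (simp add: sum_distrib_left)
  finally show ?thesis .
qed

lemma measure_extensions_decay:
  assumes escape: "\<And>l. l \<in> mor G \<Longrightarrow> rng G l = src G \<mu> \<Longrightarrow>
    \<exists>p\<in>mor G. rng G p = src G l \<and> deg G p = a \<and> \<not> P (cmp G l p)"
    and K: "0 \<le> K" "1 - rho_pow_inv a * x_min \<le> K"
  shows "measure M (\<Union>{cyl k G (cmp G \<mu> l) | l.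
      l \<in> paths_of_deg G (\<lambda>i. j * a i) \<and> rng G l = src G \<mu> \<and> P l}) \<le> K ^ j * measure M (cyl k G \<mu>)"
proof -
  have "\<Union>{cyl k G (cmp G \<mu> l) | l. l \<in> paths_of_deg G (\<lambda>i. j * a i) \<and> rng G l = src G \<mu> \<and> P l}
      = (\<Union>l\<in>{l \<in> paths_of_deg_at (src G \<mu>) (\<lambda>i. j * a i). P l}. cyl k G (cmp G \<mu> l))" for j
    unfolding paths_of_deg_at_def by blast
  moreover have "measure M (\<Union>l\<in>{l \<in> paths_of_deg_at (src G \<mu>) (\<lambda>i. j * a i). P l}. cyl k G (cmp G \<mu> l))
      \<le> K ^ j * measure M (cyl k G \<mu>)"
  proof (induction j)
    case 0
    have "cmp G \<mu> l = \<mu>" if "l \<in> paths_of_deg_at (src G \<mu>) (\<lambda>i. 0 * a i)" for l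
    proof -
      have "l \<in> mor G" "rng G l = src G \<mu>" "deg G l = 0"
        using that paths_of_deg_atD[of l] by (auto simp: fun_eq_iff)
      then show ?thesis using deg_eq_0_imp_vertex \<mu> by (metis cmp_src_right)
    qed
    then have "(\<Union>l\<in>{l \<in> paths_of_deg_at (src G \<mu>) (\<lambda>i. 0 * a i). P l}. cyl k G (cmp G \<mu> l)) \<subseteq> cyl k G \<mu>"
      by auto
    then show ?case using M.finite_measure_mono cyl_in_sets[OF \<mu>] by simp
  next
    case (Suc j)
    have "measure M (\<Union>l\<in>{l \<in> paths_of_deg_at (src G \<mu>) (\<lambda>i. Suc j * a i). P l}. cyl k G (cmp G \<mu> l))
        \<le> (1 - rho_pow_inv a * x_min) *
          measure M (\<Union>l\<in>{l \<in> paths_of_deg_at (src G \<mu>) (\<lambda>i. j * a i). P l}. cyl k G (cmp G \<mu> l))"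
      by (rule measure_extensions_step[OF escape])
    also have "\<dots> \<le> K * measure M (\<Union>l\<in>{l \<in> paths_of_deg_at (src G \<mu>) (\<lambda>i. j * a i). P l}. cyl k G (cmp G \<mu> l))"
      using K(2) by (intro mult_right_mono) simp_all
    also have "\<dots> \<le> K * (K ^ j * measure M (cyl k G \<mu>))"
      using Suc.IH K(1) by (rule mult_left_mono)
    finally show ?case by simp
  qed
  ultimately show ?thesis by simp
qed

end

lemma measure_Lmin_extensions_decay:
  assumes \<mu>: "\<mu> \<in> mor G" and \<nu>: "\<nu> \<in> mor G" and src_eq: "src G \<mu> = src G \<nu>"
    and K: "0 \<le> K" "1 - rho_pow_inv a * x_min \<le> K"
    and escape: "\<And>l. l \<in> mor G \<Longrightarrow> rng G l = src G \<mu> \<Longrightarrow>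
      \<exists>p\<in>mor G. rng G p = src G l \<and> deg G p = a \<and> Lmin G (cmp G \<mu> (cmp G l p)) (cmp G \<nu> (cmp G l p)) = {}"
  shows "measure M (\<Union>{cyl k G (cmp G \<mu> l) | l. l \<in> paths_of_deg G (\<lambda>i. j * a i) \<and>
      rng G l = src G \<mu> \<and> Lmin G (cmp G \<mu> l) (cmp G \<nu> l) \<noteq> {}}) \<le> K ^ j * measure M (cyl k G \<mu>)"
proof (rule measure_extensions_decay[where P = "\<lambda>l. Lmin G (cmp G \<mu> l) (cmp G \<nu> l) \<noteq> {}", OF \<mu> _ _ K])
  show "Lmin G (cmp G \<mu> l) (cmp G \<nu> l) \<noteq> {}"
    if "l \<in> mor G" "l' \<in> mor G" "rng G l = src G \<mu>" "src G l = rng G l'" "deg G l' = a"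
      and "Lmin G (cmp G \<mu> (cmp G l l')) (cmp G \<nu> (cmp G l l')) \<noteq> {}" for l l'
  proof -
    have "src G \<nu> = rng G l" using that(3) src_eq by simp
    then show ?thesis by (rule Lmin_nonempty_prefix[OF \<mu> \<nu> that(1,2) that(3)[symmetric] _ that(4,6)])
  qed
  show "\<exists>p\<in>mor G. rng G p = src G l \<and> deg G p = a \<and> \<not> Lmin G (cmp G \<mu> (cmp G l p)) (cmp G \<nu> (cmp G l p)) \<noteq> {}"
    if "l \<in> mor G" "rng G l = src G \<mu>" for l
    using escape[OF that] by simp
qed

end

theorem lemma8p4:
  fixes k :: nat and G :: "'a kgraph" and x :: "'a \<Rightarrow> real"
    and M :: "((nat \<Rightarrow> nat) \<times> (nat \<Rightarrow> nat) \<Rightarrow> 'a) measure" and g :: "nat \<Rightarrow> int"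
  assumes kg: "is_kgraph k G" and conv: "standing_conv k G"
    and fin: "finite_kgraph G" and sc: "strongly_connected G"
    and PF: "is_PF_vector k G x"
    and prob: "prob_space M"
    and spaceM: "space M = inf_paths k G"
    and setsM: "sets M = path_borel_sets k G"
    and MZ: "\<And>l. l \<in> mor G \<Longrightarrow>
       measure M (cyl k G l) = (\<Prod>i<k. inverse (rho G i) ^ deg G l i) * x (src G l)"
    and g: "g \<in> ZK k" "g \<notin> Per k G"
  shows "\<exists>a K. a \<in> NK k \<and> a \<noteq> 0 \<and> 0 < K \<and> K < 1 \<and>
     (\<forall>\<mu>\<in>mor G. \<forall>\<nu>\<in>mor G. src G \<mu> = src G \<nu> \<longrightarrow>
        (\<lambda>i. int (deg G \<mu> i) - int (deg G \<nu> i)) = g \<longrightarrow>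
        (\<forall>j::nat. measure M (\<Union>{cyl k G (cmp G \<mu> l) | l.
              l \<in> paths_of_deg G (\<lambda>i. j * a i) \<and> rng G l = src G \<mu> \<and>
              Lmin G (cmp G \<mu> l) (cmp G \<nu> l) \<noteq> {}})
           \<le> K ^ j * measure M (cyl k G \<mu>)))"
proof -
  interpret k_graph_measure k G x M
    by (intro k_graph_measure.intro connected_k_graph.intro k_graph.intro
        connected_k_graph_axioms.intro k_graph_measure_axioms.intro)
      (fact kg conv fin sc PF prob setsM MZ)+
  obtain m n \<eta> where "m \<in> NK k" "n \<in> NK k" and g_eq: "g = (\<lambda>i. int (m i) - int (n i))"
    and sep: "separates m n \<eta>"
    using not_Per_imp_separates[OF g] by blast
  obtain a where a: "a \<in> NK k" "a \<noteq> 0"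
    and escape: "\<And>\<mu> \<nu> l. \<mu> \<in> mor G \<Longrightarrow> \<nu> \<in> mor G \<Longrightarrow> src G \<mu> = src G \<nu> \<Longrightarrow>
      deg G \<mu> + n = deg G \<nu> + m \<Longrightarrow> l \<in> mor G \<Longrightarrow> rng G l = src G \<mu> \<Longrightarrow>
      \<exists>p\<in>mor G. rng G p = src G l \<and> deg G p = a \<and> Lmin G (cmp G \<mu> (cmp G l p)) (cmp G \<nu> (cmp G l p)) = {}"
    using separates_escape_paths[OF sep] by metis
  define K where "K = max (1/2) (1 - rho_pow_inv a * x_min)"
  have K: "0 < K" "K < 1" "1 - rho_pow_inv a * x_min \<le> K"
    using mult_pos_pos[OF rho_pow_inv_pos[OF a(1)] x_min_pos] unfolding K_def by simp_all
  show ?thesis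
  proof (intro exI[of _ a] exI[of _ K] conjI a K(1,2) ballI impI allI)
    fix \<mu> \<nu> j assume \<mu>: "\<mu> \<in> mor G" and \<nu>: "\<nu> \<in> mor G" and src_eq: "src G \<mu> = src G \<nu>"
      and dg: "(\<lambda>i. int (deg G \<mu> i) - int (deg G \<nu> i)) = g"
    have "deg G \<mu> + n = deg G \<nu> + m" using dg unfolding g_eq by (rule add_eq_add_if_int_diff_eq)
    then show "measure M (\<Union>{cyl k G (cmp G \<mu> l) | l. l \<in> paths_of_deg G (\<lambda>i. j * a i) \<and>
        rng G l = src G \<mu> \<and> Lmin G (cmp G \<mu> l) (cmp G \<nu> l) \<noteq> {}}) \<le> K ^ j * measure M (cyl k G \<mu>)"
      by (intro measure_Lmin_extensions_decay[OF \<mu> \<nu> src_eq less_imp_le[OF K(1)] K(3)])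
        (rule escape[OF \<mu> \<nu> src_eq])
  qed
qed

end
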